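(* Let $G$ be a (not necessarily connected) graph on $n\ge1$ vertices with adjacency matrix $A$, let $m\ge1$, and let $\alpha\in\mathrm{ev}(A)\setminus\{0,-m,-2m\}$. Then there exist $\mu\in\mathbb{R}$, $f\in\mathbb{R}^m$, $g\in\mathbb{R}^n$ with \[ (J_m+\alpha I)f=\tfrac{\mu}{2}\mathbf 1,\quad (A-J_n-\alpha I)g=-\tfrac{\mu}{2}\mathbf 1,\quad \langle f,f\rangle+\langle g,g\rangle=1,\quad \langle\mathbf 1,f\rangle+\langle\mathbf 1,g\rangle=0 \] if and only if there is a vector $g\in\mathbb{R}^n$ with $Ag=\alpha g$, $\langle g,g\rangle=1$ and $\langle\mathbf 1,g\rangle=0$.
   Context: $\mathrm{ev}(A)$ is the set of eigenvalues of $A$; $J_k$ the $k\times k$ all-ones matrix; $\mathbf 1$ the all-ones vector of the appropriate size; $I$ the identity. *)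

theory Defs
  imports "HOL-Analysis.Analysis"
begin

definition is_adjacency_matrix :: "real^'n^'n \<Rightarrow> bool" where
  "is_adjacency_matrix A \<longleftrightarrow>
     (\<forall>i j. A $ i $ j = A $ j $ i) \<and>
     (\<forall>i j. A $ i $ j = 0 \<or> A $ i $ j = 1) \<and>
     (\<forall>i. A $ i $ i = 0)"

definition ev :: "real^'n^'n \<Rightarrow> real set" where
  "ev A = {a. \<exists>v::real^'n. v \<noteq> 0 \<and> A *v v = a *\<^sub>R v}"

definition J :: "real^'n^'n" where
  "J = (\<chi> i j. 1)"

definition ones :: "real^'n" where
  "ones = (\<chi> i. 1)"

end

theory Submission
  imports Defs
begin

text \<open>The first equation forces \<open>f\<close> to be a multiple of \<open>\<one>\<close>, which fixes
  \<open>\<langle>\<one>, g\<rangle>\<close>; the second then says \<open>(A - \<alpha> I) g = c \<one>\<close> with \<open>c\<close> proportional to \<open>\<mu>\<close>.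
  If \<open>\<mu> = 0\<close>, \<open>g\<close> itself is the required eigenvector. Otherwise \<open>\<one>\<close> lies in the range
  of the symmetric matrix \<open>A - \<alpha> I\<close>, which is orthogonal to its kernel, so every
  \<open>\<alpha>\<close>-eigenvector is orthogonal to \<open>\<one>\<close>; normalising one finishes the proof.\<close>

lemma J_mult_vector: "(J::real^'n^'n) *v x = (ones \<bullet> x) *\<^sub>R ones"
  by (simp add: vec_eq_iff J_def ones_def matrix_vector_mult_def inner_vec_def)

lemma inner_ones_ones: "(ones::real^'n) \<bullet> ones = real CARD('n)"
  by (simp add: ones_def inner_vec_def)

lemma adjacency_matrix_transpose: "is_adjacency_matrix A \<Longrightarrow> transpose A = A"
  by (simp add: is_adjacency_matrix_def transpose_def vec_eq_iff)

lemma symmetric_matrix_inner: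
  fixes A :: "real^'n^'n"
  assumes "transpose A = A"
  shows "(A *v x) \<bullet> y = x \<bullet> (A *v y)"
  by (metis assms dot_lmul_matrix vector_transpose_matrix)

lemma symmetric_matrix_range_orthogonal_eigenvector:
  fixes A :: "real^'n^'n"
  assumes "transpose A = A" and "A *v v = \<alpha> *\<^sub>R v"
  shows "(A *v x - \<alpha> *\<^sub>R x) \<bullet> v = 0"
  using assms by (simp add: symmetric_matrix_inner[OF assms(1)] inner_diff_left)

lemma unit_eigenvector_orthogonal:
  fixes A :: "real^'n^'n"
  assumes "v \<noteq> 0" and "A *v v = \<alpha> *\<^sub>R v" and "u \<bullet> v = 0"
  shows "\<exists>g. A *v g = \<alpha> *\<^sub>R g \<and> g \<bullet> g = 1 \<and> u \<bullet> g = 0"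
proof (intro exI conjI)
  let ?g = "(1 / norm v) *\<^sub>R v"
  show "A *v ?g = \<alpha> *\<^sub>R ?g"
    using assms(2) by (simp add: matrix_vector_mult_scaleR)
  show "?g \<bullet> ?g = 1"
    using assms(1) by (simp flip: power2_norm_eq_inner add: power2_eq_square)
  show "u \<bullet> ?g = 0"
    using assms(3) by simp
qed

lemma J_plus_scaled_identity_solution:
  fixes f :: "real^'m"
  assumes "(J + \<alpha> *\<^sub>R mat 1) *v f = b *\<^sub>R ones"
    and "\<alpha> \<noteq> 0" and "\<alpha> + real CARD('m) \<noteq> 0"
  shows "f = (b / (\<alpha> + real CARD('m))) *\<^sub>R ones"
proof -
  define m where "m = real CARD('m)"
  define s where "s = ones \<bullet> f"
  have f_eq: "s *\<^sub>R ones + \<alpha> *\<^sub>R f = b *\<^sub>R ones"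
    using assms(1) by (simp add: matrix_vector_mult_add_rdistrib J_mult_vector s_def
        flip: scaleR_matrix_vector_assoc)
  then have "ones \<bullet> (s *\<^sub>R ones + \<alpha> *\<^sub>R f) = ones \<bullet> (b *\<^sub>R (ones::real^'m))"
    by simp
  then have "s * (\<alpha> + m) = b * m"
    by (simp add: inner_add_right inner_ones_ones m_def flip: s_def) (simp add: algebra_simps)
  then have "s = b * m / (\<alpha> + m)"
    using assms(3) by (simp add: m_def field_simps)
  then have "b - s = \<alpha> * (b / (\<alpha> + m))"
    using assms(3) by (simp add: m_def field_simps)
  moreover have "\<alpha> *\<^sub>R f = (b - s) *\<^sub>R ones"
    using f_eq by (simp add: scaleR_diff_left algebra_simps flip: f_eq)
  ultimately have "\<alpha> *\<^sub>R f = \<alpha> *\<^sub>R ((b / (\<alpha> + m)) *\<^sub>R ones)"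
    by simp
  then show ?thesis
    using assms(2) unfolding m_def by (metis scaleR_cancel_left)
qed

lemma eigenvector_orthogonal_ones_kernel:
  assumes "A *v g = \<alpha> *\<^sub>R g" and "ones \<bullet> g = 0"
  shows "(A - J - \<alpha> *\<^sub>R mat 1) *v g = 0"
  using assms by (simp add: matrix_vector_mult_diff_rdistrib J_mult_vector
      flip: scaleR_matrix_vector_assoc)

lemma solution_imp_orthogonal_unit_eigenvector:
  fixes A :: "real^'n^'n" and f :: "real^'m"
  assumes "transpose A = A" and "\<alpha> \<in> ev A"
    and \<alpha>: "\<alpha> \<notin> {0, - real CARD('m), - 2 * real CARD('m)}"
    and f_eq: "(J + \<alpha> *\<^sub>R mat 1) *v f = b *\<^sub>R ones"
    and g_eq: "(A - J - \<alpha> *\<^sub>R mat 1) *v g = - (b *\<^sub>R ones)"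
    and unit: "f \<bullet> f + g \<bullet> g = 1" and balanced: "ones \<bullet> f + ones \<bullet> g = 0"
  shows "\<exists>g. A *v g = \<alpha> *\<^sub>R g \<and> g \<bullet> g = 1 \<and> ones \<bullet> g = 0"
proof -
  define m where "m = real CARD('m)"
  have "\<alpha> \<noteq> 0" "\<alpha> + m \<noteq> 0" "\<alpha> + 2 * m \<noteq> 0"
    using \<alpha> by (auto simp: m_def)
  have f: "f = (b / (\<alpha> + m)) *\<^sub>R ones"
    using J_plus_scaled_identity_solution[OF f_eq] \<open>\<alpha> \<noteq> 0\<close> \<open>\<alpha> + m \<noteq> 0\<close>
    by (simp add: m_def)
  have ones_g: "ones \<bullet> g = - (b * m / (\<alpha> + m))"
    using balanced by (simp add: f inner_ones_ones m_def eq_neg_iff_add_eq_0 add.commute)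
  define c where "c = - b * (\<alpha> + 2 * m) / (\<alpha> + m)"
  have "ones \<bullet> g - b = c"
    using \<open>\<alpha> + m \<noteq> 0\<close> by (simp add: ones_g c_def field_simps)
  moreover have "A *v g - \<alpha> *\<^sub>R g = (ones \<bullet> g - b) *\<^sub>R ones"
    using g_eq by (simp add: matrix_vector_mult_diff_rdistrib J_mult_vector scaleR_diff_left
        algebra_simps flip: scaleR_matrix_vector_assoc)
  ultimately have Ag: "A *v g - \<alpha> *\<^sub>R g = c *\<^sub>R ones"
    by simp
  show ?thesis
  proof (cases "b = 0")
    case True
    then have "c = 0" and "f = 0" and "ones \<bullet> g = 0"
      by (simp_all add: c_def f ones_g)
    then show ?thesis
      using Ag unit by auto
  next
    case False
    then have "c \<noteq> 0"
      using \<open>\<alpha> + m \<noteq> 0\<close> \<open>\<alpha> + 2 * m \<noteq> 0\<close> by (simp add: c_def)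
    obtain v where v: "v \<noteq> 0" "A *v v = \<alpha> *\<^sub>R v"
      using \<open>\<alpha> \<in> ev A\<close> by (auto simp: ev_def)
    have "c * (ones \<bullet> v) = 0"
      using symmetric_matrix_range_orthogonal_eigenvector[OF \<open>transpose A = A\<close> v(2), of g]
      by (simp add: Ag)
    then have "ones \<bullet> v = 0"
      using \<open>c \<noteq> 0\<close> by simp
    then show ?thesis
      using unit_eigenvector_orthogonal[OF v] by blast
  qed
qed

theorem lemma3p6:
  fixes A :: "real^'n^'n" and \<alpha> :: real
  assumes "is_adjacency_matrix A"
    and "\<alpha> \<in> ev A"
    and "\<alpha> \<notin> {0, - real CARD('m), - 2 * real CARD('m)}"
  shows "(\<exists>(\<mu>::real) (f::real^'m) (g::real^'n).
            (J + \<alpha> *\<^sub>R mat 1) *v f = (\<mu> / 2) *\<^sub>R ones \<and>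
            (A - J - \<alpha> *\<^sub>R mat 1) *v g = - ((\<mu> / 2) *\<^sub>R ones) \<and>
            f \<bullet> f + g \<bullet> g = 1 \<and>
            ones \<bullet> f + ones \<bullet> g = 0)
         \<longleftrightarrow>
         (\<exists>g::real^'n. A *v g = \<alpha> *\<^sub>R g \<and> g \<bullet> g = 1 \<and> ones \<bullet> g = 0)"
  using solution_imp_orthogonal_unit_eigenvector[OF adjacency_matrix_transpose[OF assms(1)] assms(2,3)]
    eigenvector_orthogonal_ones_kernel
  by (fastforce intro!: exI[of _ "0::real"] exI[of _ "0::real^'m"])

end
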